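(* For Lebesgue-almost all $(\xi,\eta)\in\mathbb{R}^2$ one has $\lambda_{\min}(\xi,\eta)=\tfrac12$.
   Context: For real numbers $\xi,\eta$: $\lambda(\xi,\eta)$ (resp. $\widehat{\lambda}(\xi,\eta)$) is the supremum of the real $\lambda>0$ such that the system $1\le |x_0|\le X$, $\max(|x_0\xi-x_1|,|x_0\eta-x_2|)\le X^{-\lambda}$ has a solution $(x_0,x_1,x_2)\in\mathbb{Z}^3\setminus\{0\}$ for arbitrarily large $X$ (resp. for every sufficiently large $X$). For $0\le\mu<\lambda(\xi,\eta)$, $\widehat{\lambda}_\mu(\xi,\eta)$ is the supremum of the real $\lambda>0$ such that the system $1\le|x_0|\le X$, $\max(|x_0\xi-x_1|,|x_0\eta-x_2|)\le\min(X^{-\lambda},|x_0|^{-\mu})$ has a solution $(x_0,x_1,x_2)\in\mathbb{Z}^3\setminus\{0\}$ for every sufficiently large $X$ (the supremum of the empty set being $0$). The map $\mu\mapsto\widehat{\lambda}_\mu(\xi,\eta)$ is non-increasing, and $\lambda_{\min}(\xi,\eta):=\inf_{0<\mu<\lambda(\xi,\eta)}\widehat{\lambda}_\mu(\xi,\eta)=\lim_{\mu\to\lambda(\xi,\eta)^-}\widehat{\lambda}_\mu(\xi,\eta)$. *)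

theory Defs
  imports "HOL-Analysis.Analysis"
begin

definition solvable :: "real \<Rightarrow> real \<Rightarrow> real \<Rightarrow> real option \<Rightarrow> real \<Rightarrow> bool" where
  "solvable xi eta l mu X \<longleftrightarrow>
     (\<exists>x0 x1 x2 :: int. 1 \<le> \<bar>x0\<bar> \<and> real_of_int \<bar>x0\<bar> \<le> X \<and>
        max \<bar>of_int x0 * xi - of_int x1\<bar> \<bar>of_int x0 * eta - of_int x2\<bar> \<le> X powr (- l) \<and>
        (case mu of None \<Rightarrow> True
         | Some m \<Rightarrow> max \<bar>of_int x0 * xi - of_int x1\<bar> \<bar>of_int x0 * eta - of_int x2\<bar>
                      \<le> real_of_int \<bar>x0\<bar> powr (- m)))"

text \<open>Uniform exponent lambda(xi,eta); sup of the empty set is taken to be 0.\<close>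
definition lam :: "real \<Rightarrow> real \<Rightarrow> ereal" where
  "lam xi eta = Sup (insert 0 (ereal ` {l. l > 0 \<and> (\<exists>\<^sub>F X in at_top. solvable xi eta l None X)}))"

definition lamhat_mu :: "real \<Rightarrow> real \<Rightarrow> real \<Rightarrow> ereal" where
  "lamhat_mu mu xi eta = Sup (insert 0 (ereal ` {l. l > 0 \<and> (\<forall>\<^sub>F X in at_top. solvable xi eta l (Some mu) X)}))"

definition lam_min :: "real \<Rightarrow> real \<Rightarrow> ereal" where
  "lam_min xi eta = Inf ((\<lambda>mu. lamhat_mu mu xi eta) ` {mu. 0 < mu \<and> ereal mu < lam xi eta})"

end

theory Submission
  imports Defs
begin

text \<open>Dirichlet's pigeonhole argument gives, for every X, an x0 \<le> X approximating both
  numbers to within X^(-1/2); since then |x0|^(-mu) \<ge> X^(-1/2) for mu \<le> 1/2, every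
  exponent below 1/2 is uniformly attainable, for all (xi, eta).
  Conversely, for l > 1/2 the points of a unit square admitting an approximation with
  denominator q and error q^(-l) have measure O(q^(-2l)), a summable bound, so by
  Borel--Cantelli almost every (xi, eta) has only finitely many such denominators.
  For such a point the remaining small denominators x0 leave a positive error (otherwise
  all multiples of x0 would be exact approximations), so no exponent above 1/2 is even
  attained infinitely often.\<close>

definition approx_err :: "real \<Rightarrow> real \<Rightarrow> int \<Rightarrow> int \<Rightarrow> int \<Rightarrow> real" where
  "approx_err xi eta x0 x1 x2 =
     max \<bar>of_int x0 * xi - of_int x1\<bar> \<bar>of_int x0 * eta - of_int x2\<bar>"

lemma solvable_iff_approx_err:
  "solvable xi eta l mu X \<longleftrightarrow>
     (\<exists>x0 x1 x2. 1 \<le> \<bar>x0\<bar> \<and> real_of_int \<bar>x0\<bar> \<le> X \<and> approx_err xi eta x0 x1 x2 \<le> X powr (- l) \<and>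
        (case mu of None \<Rightarrow> True
         | Some m \<Rightarrow> approx_err xi eta x0 x1 x2 \<le> real_of_int \<bar>x0\<bar> powr (- m)))"
  unfolding solvable_def approx_err_def ..

lemma solvable_Some_imp_None: "solvable xi eta l (Some m) X \<Longrightarrow> solvable xi eta l None X"
  unfolding solvable_def by auto

lemma approx_err_nonneg: "0 \<le> approx_err xi eta x0 x1 x2"
  unfolding approx_err_def by simp

lemma approx_err_mult:
  "approx_err xi eta (k * x0) (k * x1) (k * x2) = \<bar>of_int k\<bar> * approx_err xi eta x0 x1 x2"
proof -
  have "\<bar>of_int (k * x0) * t - of_int (k * x) :: real\<bar> = \<bar>of_int k\<bar> * \<bar>of_int x0 * t - of_int x\<bar>"
    for t x by (simp add: abs_mult [symmetric] algebra_simps)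
  then show ?thesis
    unfolding approx_err_def by (simp add: max_mult_distrib_left)
qed

lemma approx_err_round_le:
  "approx_err xi eta x0 (round (of_int x0 * xi)) (round (of_int x0 * eta)) \<le> approx_err xi eta x0 x1 x2"
  unfolding approx_err_def by (intro max.mono round_diff_minimal)

lemma simultaneous_dirichlet:
  assumes "Q > 0"
  obtains x0 x1 x2 :: int
  where "1 \<le> x0" "x0 \<le> int (Q\<^sup>2)" "approx_err xi eta x0 x1 x2 < 1 / real Q"
proof -
  obtain x0 p where x0: "0 < x0" "x0 \<le> int (Q\<^sup>2)"
    and p: "\<And>i::nat. i < 2 \<Longrightarrow> \<bar>of_int x0 * (if i = 0 then xi else eta) - of_int (p i)\<bar> < 1 / real Q"
    using Dirichlet_approx_simult[OF assms, where \<theta>="\<lambda>i. if i = 0 then xi else eta" and n=2]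
    by blast
  have "\<bar>of_int x0 * xi - of_int (p 0)\<bar> < 1 / real Q" "\<bar>of_int x0 * eta - of_int (p 1)\<bar> < 1 / real Q"
    using p[of 0] p[of 1] by simp_all
  then have "approx_err xi eta x0 (p 0) (p 1) < 1 / real Q"
    unfolding approx_err_def by simp
  with x0 show ?thesis
    by (intro that) simp_all
qed

lemma eventually_solvable_below_half:
  assumes l: "0 < l" "l < 1/2" and mu: "mu \<le> 1/2"
  shows "\<forall>\<^sub>F X in at_top. solvable xi eta l (Some mu) X"
proof -
  have "((\<lambda>X::real. X powr (l - 1/2)) \<longlongrightarrow> 0) at_top"
    using l by (intro tendsto_neg_powr filterlim_ident) auto
  then have "\<forall>\<^sub>F X in at_top. X powr (l - 1/2) < 1/2"
    by (rule order_tendstoD) simp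
  then show ?thesis using eventually_ge_at_top[of "4::real"]
  proof eventually_elim
    case (elim X)
    define Q where "Q = nat \<lfloor>sqrt X\<rfloor>"
    have "sqrt X \<ge> 2" using elim real_sqrt_le_mono[of 4 X] by simp
    then have Q: "Q > 0" "real Q \<le> sqrt X" "sqrt X / 2 \<le> real Q"
      unfolding Q_def by linarith+
    obtain x0 x1 x2 where x0: "1 \<le> x0" "x0 \<le> int (Q\<^sup>2)"
      and err: "approx_err xi eta x0 x1 x2 < 1 / real Q"
      using simultaneous_dirichlet[OF Q(1)] .
    have "real_of_int x0 \<le> real_of_int (int (Q\<^sup>2))"
      using x0(2) by (simp only: of_int_le_iff)
    then have x0Q: "real_of_int \<bar>x0\<bar> \<le> (real Q)\<^sup>2"
      using x0(1) by simp
    have "(real Q)\<^sup>2 \<le> X"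
      using Q(2) elim(2) power_mono[OF Q(2), of 2] by simp
    then have x0X: "real_of_int \<bar>x0\<bar> \<le> X"
      using x0Q by linarith
    have "real_of_int \<bar>x0\<bar> powr mu \<le> real_of_int \<bar>x0\<bar> powr (1/2)"
      using x0(1) mu by (intro powr_mono) auto
    also have "\<dots> \<le> real Q"
      using x0Q real_sqrt_le_mono[OF x0Q] by (simp add: powr_half_sqrt)
    finally have "1 / real Q \<le> real_of_int \<bar>x0\<bar> powr (- mu)"
      using x0(1) Q(1) by (simp add: powr_minus_divide divide_simps)
    moreover have "X powr l \<le> real Q"
    proof -
      have "X powr l = X powr (l - 1/2) * X powr (1/2)"
        by (simp add: powr_add [symmetric])
      also have "\<dots> = X powr (l - 1/2) * sqrt X"
        using elim by (simp add: powr_half_sqrt)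
      also have "\<dots> \<le> sqrt X / 2"
        using elim mult_right_mono[of "X powr (l - 1/2)" "1/2" "sqrt X"] by simp
      finally show ?thesis using Q(3) by linarith
    qed
    then have "1 / real Q \<le> X powr (- l)"
      using Q(1) elim by (simp add: powr_minus_divide divide_simps)
    ultimately show ?case
      unfolding solvable_iff_approx_err using x0(1) x0X err
      by (intro exI[of _ x0] exI[of _ x1] exI[of _ x2]) auto
  qed
qed

definition approximable_to_order :: "real \<Rightarrow> real \<Rightarrow> real \<Rightarrow> bool" where
  "approximable_to_order l xi eta \<longleftrightarrow>
     (\<exists>\<^sub>F q in sequentially. \<exists>x1 x2. approx_err xi eta (int q) x1 x2 \<le> real q powr (- l))"

lemma approximable_to_order_antimono:
  assumes "approximable_to_order l' xi eta" "l \<le> l'"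
  shows "approximable_to_order l xi eta"
  using assms(1) unfolding approximable_to_order_def
proof (rule frequently_elim1)
  fix q :: nat
  assume "\<exists>x1 x2. approx_err xi eta (int q) x1 x2 \<le> real q powr (- l')"
  moreover have "real q powr (- l') \<le> real q powr (- l)"
    using assms(2) by (cases "q = 0") (auto intro: powr_mono)
  ultimately show "\<exists>x1 x2. approx_err xi eta (int q) x1 x2 \<le> real q powr (- l)"
    by (meson order_trans)
qed

lemma approx_err_pos_if_not_approximable:
  assumes "\<not> approximable_to_order l xi eta" "x0 \<noteq> 0"
  shows "0 < approx_err xi eta x0 x1 x2"
proof (rule ccontr)
  assume "\<not> 0 < approx_err xi eta x0 x1 x2"
  then have exact: "approx_err xi eta x0 x1 x2 = 0"
    using approx_err_nonneg[of xi eta x0 x1 x2] by linarith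
  have "approximable_to_order l xi eta"
    unfolding approximable_to_order_def frequently_sequentially
  proof
    fix N :: nat
    define k where "k = sgn x0 * int (Suc N)"
    have "k * x0 = int (Suc N) * \<bar>x0\<bar>"
      unfolding k_def by (simp add: abs_sgn mult.commute mult.left_commute)
    moreover have "int (Suc N) * 1 \<le> int (Suc N) * \<bar>x0\<bar>"
      using assms(2) by (intro mult_left_mono) auto
    ultimately have "int N \<le> k * x0"
      by (smt (verit) of_nat_Suc)
    then have "k * x0 = int (nat (k * x0))" and "N \<le> nat (k * x0)"
      by (simp_all add: le_nat_iff)
    moreover have "approx_err xi eta (k * x0) (k * x1) (k * x2) = 0"
      by (simp add: approx_err_mult exact)
    ultimately show "\<exists>q\<ge>N. \<exists>x1 x2. approx_err xi eta (int q) x1 x2 \<le> real q powr (- l)"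
      by (intro exI[of _ "nat (k * x0)"] conjI exI[of _ "k * x1"] exI[of _ "k * x2"]) simp_all
  qed
  with assms(1) show False
    by contradiction
qed

lemma not_frequently_solvable:
  assumes na: "\<not> approximable_to_order l xi eta" and l: "0 < l"
  shows "\<not> (\<exists>\<^sub>F X in at_top. solvable xi eta l None X)"
proof
  assume freq: "\<exists>\<^sub>F X in at_top. solvable xi eta l None X"
  obtain N where N: "\<And>q x1 x2. N \<le> q \<Longrightarrow> real q powr (- l) < approx_err xi eta (int q) x1 x2"
    using na unfolding approximable_to_order_def not_frequently eventually_sequentially
    by (auto simp: not_le)
  \<comment> \<open>Denominators with |x0| \<ge> N are too bad by hypothesis; each of the finitely many
    smaller ones has a positive best error d x0, which X^(-l) eventually undercuts.\<close>
  define A where "A = {x0 :: int. x0 \<noteq> 0 \<and> \<bar>x0\<bar> < int N}"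
  define d where "d x0 = approx_err xi eta x0 (round (of_int x0 * xi)) (round (of_int x0 * eta))" for x0
  have "finite A"
    unfolding A_def by (rule finite_subset[of _ "{-int N..int N}"]) auto
  moreover have "\<forall>\<^sub>F X in at_top. X powr (- l) < d x0" if "x0 \<in> A" for x0
  proof -
    have "((\<lambda>X::real. X powr (- l)) \<longlongrightarrow> 0) at_top"
      using l by (intro tendsto_neg_powr filterlim_ident) auto
    moreover have "0 < d x0"
      using that unfolding A_def d_def by (auto intro: approx_err_pos_if_not_approximable[OF na])
    ultimately show ?thesis by (rule order_tendstoD)
  qed
  ultimately have "\<forall>\<^sub>F X in at_top. (\<forall>x0\<in>A. X powr (- l) < d x0) \<and> 1 \<le> X"
    by (intro eventually_conj eventually_ge_at_top eventually_ball_finite) auto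
  from frequently_ex[OF frequently_eventually_conj[OF freq this]] obtain X x0 x1 x2 where
    x0: "1 \<le> \<bar>x0\<bar>" "real_of_int \<bar>x0\<bar> \<le> X" and err: "approx_err xi eta x0 x1 x2 \<le> X powr (- l)"
    and small: "\<forall>x0\<in>A. X powr (- l) < d x0"
    unfolding solvable_iff_approx_err by auto
  have X_le: "X powr (- l) \<le> real_of_int \<bar>x0\<bar> powr (- l)"
    using x0 l by (intro powr_mono2') auto
  show False
  proof (cases "x0 \<in> A")
    case True
    then show False
      using small err approx_err_round_le[of xi eta x0 x1 x2] unfolding d_def by fastforce
  next
    case False
    then have "N \<le> nat \<bar>x0\<bar>"
      using x0(1) unfolding A_def by auto
    moreover have "\<bar>real_of_int (sgn x0)\<bar> = 1" and "sgn x0 * x0 = int (nat \<bar>x0\<bar>)"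
      using x0(1) by (cases "x0 > 0"; simp)+
    then have "approx_err xi eta (int (nat \<bar>x0\<bar>)) (sgn x0 * x1) (sgn x0 * x2) =
        approx_err xi eta x0 x1 x2"
      using approx_err_mult[of xi eta "sgn x0" x0 x1 x2] by simp
    ultimately show False
      using N[of "nat \<bar>x0\<bar>" "sgn x0 * x1" "sgn x0 * x2"] err X_le by simp
  qed
qed

lemma Sup_insert_zero_eq:
  fixes L :: "real set"
  assumes "{l. 0 < l \<and> l < c} \<subseteq> L" "\<And>l. l \<in> L \<Longrightarrow> l \<le> c" "0 < c"
  shows "Sup (insert 0 (ereal ` L)) = ereal c"
proof (rule antisym)
  show "Sup (insert 0 (ereal ` L)) \<le> ereal c"
    using assms(2,3) by (intro Sup_least) auto
  show "ereal c \<le> Sup (insert 0 (ereal ` L))"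
  proof (rule dense_le)
    fix y assume y: "y < ereal c"
    show "y \<le> Sup (insert 0 (ereal ` L))"
    proof (cases "y \<le> 0")
      case True
      then show ?thesis by (meson Sup_upper insertI1 order_trans)
    next
      case False
      with y obtain r where "y = ereal r" "0 < r" "r < c"
        by (cases y) auto
      then show ?thesis using assms(1) by (intro Sup_upper) auto
    qed
  qed
qed

lemma lam_eq_half:
  assumes "\<And>l. l > 1/2 \<Longrightarrow> \<not> approximable_to_order l xi eta"
  shows "lam xi eta = ereal (1/2)"
  unfolding lam_def
proof (rule Sup_insert_zero_eq)
  show "{l. 0 < l \<and> l < 1/2} \<subseteq> {l. l > 0 \<and> (\<exists>\<^sub>F X in at_top. solvable xi eta l None X)}"
    using eventually_solvable_below_half[of _ "1/2"]
    by (auto intro!: eventually_frequently eventually_mono[OF _ solvable_Some_imp_None])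
  show "l \<le> 1/2" if "l \<in> {l. l > 0 \<and> (\<exists>\<^sub>F X in at_top. solvable xi eta l None X)}" for l
    using that not_frequently_solvable[OF assms] by force
qed simp

lemma lamhat_mu_eq_half:
  assumes "\<And>l. l > 1/2 \<Longrightarrow> \<not> approximable_to_order l xi eta" and mu: "mu \<le> 1/2"
  shows "lamhat_mu mu xi eta = ereal (1/2)"
  unfolding lamhat_mu_def
proof (rule Sup_insert_zero_eq)
  show "{l. 0 < l \<and> l < 1/2} \<subseteq> {l. l > 0 \<and> (\<forall>\<^sub>F X in at_top. solvable xi eta l (Some mu) X)}"
    using eventually_solvable_below_half mu by auto
  show "l \<le> 1/2" if "l \<in> {l. l > 0 \<and> (\<forall>\<^sub>F X in at_top. solvable xi eta l (Some mu) X)}" for l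
  proof (rule ccontr)
    assume "\<not> l \<le> 1/2"
    moreover have "\<exists>\<^sub>F X in at_top. solvable xi eta l None X"
      using that by (auto intro!: eventually_frequently eventually_mono[OF _ solvable_Some_imp_None])
    ultimately show False
      using not_frequently_solvable[OF assms(1)] by force
  qed
qed simp

lemma lam_min_eq_half:
  assumes "\<And>l. l > 1/2 \<Longrightarrow> \<not> approximable_to_order l xi eta"
  shows "lam_min xi eta = ereal (1/2)"
proof -
  have dom: "{mu. 0 < mu \<and> ereal mu < lam xi eta} = {mu. 0 < mu \<and> mu < 1/2}"
    using lam_eq_half[OF assms] by auto
  have "(\<lambda>mu. lamhat_mu mu xi eta) ` {mu. 0 < mu \<and> mu < 1/2} = {ereal (1/2)}"
    using lamhat_mu_eq_half[OF assms] by (auto intro!: image_eqI[of _ _ "1/4"])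
  then show ?thesis
    unfolding lam_min_def dom by simp
qed

text \<open>For d \<le> 1 this covers the x in [a, a + 1] with q x within d of an integer, using
  q + 3 intervals of length 2 d / q.\<close>
definition near_multiples :: "nat \<Rightarrow> int \<Rightarrow> real \<Rightarrow> real set" where
  "near_multiples q a d =
     (\<Union>p\<in>{int q * a - 1 .. int q * a + int q + 1}. {(of_int p - d) / q .. (of_int p + d) / q})"

lemma near_multiples_sets [measurable]: "near_multiples q a d \<in> sets borel"
  unfolding near_multiples_def by (intro sets.finite_UN) auto

lemma emeasure_near_multiples_le:
  assumes "0 < q" "0 \<le> d"
  shows "emeasure lborel (near_multiples q a d) \<le> ennreal (8 * d)"
proof -
  let ?P = "{int q * a - 1 .. int q * a + int q + 1}"
  have "emeasure lborel (near_multiples q a d)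
      \<le> (\<Sum>p\<in>?P. emeasure lborel {(of_int p - d) / q .. (of_int p + d) / q})"
    unfolding near_multiples_def by (rule emeasure_subadditive_finite) auto
  also have "\<dots> = (\<Sum>p\<in>?P. ennreal (2 * d / q))"
    using assms by (intro sum.cong refl) (simp add: divide_simps diff_divide_distrib [symmetric])
  also have "\<dots> = of_nat (q + 3) * ennreal (2 * d / q)"
    by (simp add: nat_add_distrib add.commute)
  also have "\<dots> = ennreal (real (q + 3) * (2 * d / q))"
    using assms by (subst ennreal_mult) (auto simp: ennreal_of_nat_eq_real_of_nat)
  also have "\<dots> \<le> ennreal (8 * d)"
  proof (rule ennreal_leI)
    have "real (q + 3) * (2 * d / q) = 2 * d + 6 * d / q"
      using assms by (simp add: field_simps)
    also have "\<dots> \<le> 8 * d"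
      using assms by (simp add: divide_le_eq mult_le_cancel_left1)
    finally show "real (q + 3) * (2 * d / q) \<le> 8 * d" .
  qed
  finally show ?thesis .
qed

lemma near_multiplesI:
  assumes "0 < q" "0 \<le> d" "d \<le> 1" "x \<in> {of_int a .. of_int a + 1}" "\<bar>real q * x - of_int p\<bar> \<le> d"
  shows "x \<in> near_multiples q a d"
proof -
  have "real q * a \<le> real q * x" "real q * x \<le> real q * a + q"
    using assms(4) mult_left_mono[of a x "real q"] mult_left_mono[of x "a + 1" "real q"]
    by (auto simp: algebra_simps)
  then have "real_of_int (int q * a - 1) \<le> of_int p" "of_int p \<le> real_of_int (int q * a + int q + 1)"
    using assms(3,5) by (auto simp: abs_le_iff)
  then have "p \<in> {int q * a - 1 .. int q * a + int q + 1}"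
    by (simp only: of_int_le_iff atLeastAtMost_iff)
  moreover have "x \<in> {(of_int p - d) / q .. (of_int p + d) / q}"
    using assms(1,5) by (auto simp: field_simps abs_le_iff)
  ultimately show ?thesis
    unfolding near_multiples_def by auto
qed

lemma AE_not_approximable_in_square:
  fixes a b :: int
  assumes l: "l > 1/2"
  shows "AE p in lborel. p \<in> {of_int a .. of_int a + 1} \<times> {of_int b .. of_int b + 1} \<longrightarrow>
    \<not> approximable_to_order l (fst p) (snd p)"
proof -
  define \<delta> where "\<delta> n = real (Suc n) powr (- l)" for n
  have \<delta>: "0 \<le> \<delta> n" "\<delta> n \<le> 1" for n
    unfolding \<delta>_def using l powr_mono[of "- l" 0 "real (Suc n)"] by auto
  define A where "A n = near_multiples (Suc n) a (\<delta> n) \<times> near_multiples (Suc n) b (\<delta> n)" for n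
  have A_sets: "A n \<in> sets lborel" for n
    unfolding A_def lborel_prod [symmetric] by (intro pair_measureI) auto
  have A_le: "emeasure lborel (A n) \<le> ennreal (64 * (\<delta> n)\<^sup>2)" for n
  proof -
    have "emeasure lborel (A n) =
        emeasure lborel (near_multiples (Suc n) a (\<delta> n)) * emeasure lborel (near_multiples (Suc n) b (\<delta> n))"
      unfolding A_def lborel_prod [symmetric] by (intro lborel.emeasure_pair_measure_Times) auto
    also have "\<dots> \<le> ennreal (8 * \<delta> n) * ennreal (8 * \<delta> n)"
      using \<delta> by (intro mult_mono emeasure_near_multiples_le) auto
    also have "\<dots> = ennreal (64 * (\<delta> n)\<^sup>2)"
      using \<delta> by (simp add: ennreal_mult [symmetric] power2_eq_square)
    finally show ?thesis .
  qed
  have A_finite: "emeasure lborel (A n) < \<infinity>" for n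
    by (rule le_less_trans[OF A_le]) simp
  have "(\<delta> n)\<^sup>2 = real (Suc n) powr (- 2 * l)" for n
    unfolding \<delta>_def power2_eq_square by (simp flip: powr_add)
  then have bound: "norm (measure lborel (A n)) \<le> 64 * real (Suc n) powr (- 2 * l)" for n
    using A_le[of n] A_finite[of n] by (simp add: measure_def enn2real_leI)
  have "summable (\<lambda>n. 64 * real (Suc n) powr (- 2 * l))"
    using summable_Suc_iff[where f="\<lambda>n. real n powr (- 2 * l)"] summable_real_powr_iff l
    by (intro summable_mult) simp
  then have "summable (\<lambda>n. measure lborel (A n))"
    by (rule summable_comparison_test'[where N=0]) (rule bound)
  then have "AE p in lborel. \<forall>\<^sub>F n in sequentially. p \<in> space lborel - A n"
    by (intro borel_cantelli_AE1 A_sets A_finite)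
  then show ?thesis
  proof (rule AE_mp, intro AE_I2 impI)
    fix p :: "real \<times> real"
    assume ev: "\<forall>\<^sub>F n in sequentially. p \<in> space lborel - A n"
      and square: "p \<in> {of_int a .. of_int a + 1} \<times> {of_int b .. of_int b + 1}"
    have "\<forall>\<^sub>F n in sequentially. \<forall>x1 x2. \<delta> n < approx_err (fst p) (snd p) (int (Suc n)) x1 x2"
      using ev
    proof (rule eventually_mono, intro allI)
      fix n x1 x2
      assume "p \<in> space lborel - A n"
      then have "\<not> (fst p \<in> near_multiples (Suc n) a (\<delta> n) \<and> snd p \<in> near_multiples (Suc n) b (\<delta> n))"
        unfolding A_def by (cases p) auto
      then show "\<delta> n < approx_err (fst p) (snd p) (int (Suc n)) x1 x2"
        using near_multiplesI[OF _ \<delta>, of "Suc n"] square unfolding approx_err_def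
        by (cases p) (fastforce simp: not_less)
    qed
    then show "\<not> approximable_to_order l (fst p) (snd p)"
      unfolding approximable_to_order_def not_frequently \<delta>_def
      by (subst eventually_sequentially_Suc [symmetric]) (simp add: not_le)
  qed
qed

lemma AE_not_approximable_above_half:
  "AE p in lborel. \<forall>l > 1/2. \<not> approximable_to_order l (fst p) (snd p)"
proof -
  have "AE p in lborel. \<forall>k::nat. \<forall>s::int \<times> int.
      p \<in> {of_int (fst s) .. of_int (fst s) + 1} \<times> {of_int (snd s) .. of_int (snd s) + 1} \<longrightarrow>
      \<not> approximable_to_order (1/2 + 1 / Suc k) (fst p) (snd p)"
    unfolding AE_all_countable by (intro allI AE_not_approximable_in_square) simp
  then show ?thesis
  proof (rule AE_mp, intro AE_I2 impI allI)
    fix p :: "real \<times> real" and l :: real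
    assume H: "\<forall>k::nat. \<forall>s::int \<times> int.
      p \<in> {of_int (fst s) .. of_int (fst s) + 1} \<times> {of_int (snd s) .. of_int (snd s) + 1} \<longrightarrow>
      \<not> approximable_to_order (1/2 + 1 / Suc k) (fst p) (snd p)"
    assume "l > 1/2"
    then obtain k :: nat where k: "1 / Suc k < l - 1/2"
      using reals_Archimedean[of "l - 1/2"] by (auto simp: inverse_eq_divide)
    have "\<not> approximable_to_order (1/2 + 1 / Suc k) (fst p) (snd p)"
      using spec[OF spec[OF H, of k], of "(\<lfloor>fst p\<rfloor>, \<lfloor>snd p\<rfloor>)"] by (cases p) auto
    moreover have "1/2 + 1 / Suc k \<le> l"
      using k by simp
    ultimately show "\<not> approximable_to_order l (fst p) (snd p)"
      using approximable_to_order_antimono by blast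
  qed
qed

theorem theorem1:
  shows "AE p in (lborel :: (real \<times> real) measure). lam_min (fst p) (snd p) = ereal (1/2)"
  using AE_not_approximable_above_half by (rule AE_mp) (auto intro!: AE_I2 lam_min_eq_half)

end
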